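(* For every deterministic local policy D-Local there exists a collectible reward decomposition MDP with $n$ rewards and discount factor $\gamma=1-1/n$ such that $\frac{\text{D-Local}}{\text{OPT}}\le\frac{24}{n}$, where D-Local also denotes the value of the policy on that MDP.
   Context: A collectible reward decomposition MDP is an MDP with deterministic dynamics, an initial state $s_0$, discount $\gamma$, and $n$ reward states $s_1,\dots,s_n$; visiting $s_i$ for the first time yields reward $1$ and each reward can be collected only once. For each $j$ there is an option $o_j$ that follows a shortest path to $s_j$ and terminates when collecting it; its value from state $x$ is $V_j(x)=\gamma^{d(x,s_j)}$ where $d$ is shortest-path distance. A local policy is a mapping $\pi(x,h,\{V_i(x)\}_{i=1}^n)\to\Delta(\{o_i\}_{i=1}^n)$ from the current state $x$, the history $h$ of previous steps (including which rewards were collected) and the option values at $x$, to a distribution over options; it is deterministic if it always outputs a point mass. The value of a policy is its expected discounted return $\sum_k\gamma^{T_k}$ ($T_k$ the time the $k$-th reward is collected), and $\text{OPT}$ is the maximum over all orders of collecting the rewards of the discounted return, i.e. $\max_{(i_1,\dots,i_n)}\sum_{j=0}^{n-1}\gamma^{\sum_{t=0}^{j}d_{i_t,i_{t+1}}}$ with $i_0=s_0$. *)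

theory Defs
  imports Complex_Main "HOL-Combinatorics.Permutations"
begin

text \<open>States are natural numbers; the dynamics is given by a transition relation E
  (the pairs (x, T(x,a)) over actions a) on a finite state set S.\<close>

definition sp_dist :: "(nat \<times> nat) set \<Rightarrow> nat \<Rightarrow> nat \<Rightarrow> nat" where
  "sp_dist E x y = (LEAST k. (x, y) \<in> E ^^ k)"

text \<open>nxt i x is the next state on the shortest path followed by option o_i from x.\<close>
definition crd_mdp :: "nat \<Rightarrow> nat set \<Rightarrow> (nat \<times> nat) set \<Rightarrow> nat \<Rightarrow> (nat \<Rightarrow> nat)
    \<Rightarrow> (nat \<Rightarrow> nat \<Rightarrow> nat) \<Rightarrow> bool" where
  "crd_mdp n S E s0 s nxt \<longleftrightarrow>
     finite S \<and> E \<subseteq> S \<times> S \<and> (\<forall>x\<in>S. \<exists>y. (x, y) \<in> E) \<and>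
     s0 \<in> S \<and> s ` {1..n} \<subseteq> S \<and> inj_on s {1..n} \<and>
     (\<forall>x\<in>S. \<forall>i\<in>{1..n}. (x, s i) \<in> E\<^sup>*) \<and>
     (\<forall>x\<in>S. \<forall>i\<in>{1..n}. x \<noteq> s i \<longrightarrow>
        (x, nxt i x) \<in> E \<and> Suc (sp_dist E (nxt i x) (s i)) = sp_dist E x (s i))"

definition option_values :: "nat \<Rightarrow> real \<Rightarrow> (nat \<times> nat) set \<Rightarrow> (nat \<Rightarrow> nat) \<Rightarrow> nat \<Rightarrow> real list" where
  "option_values n \<gamma> E s x = map (\<lambda>i. \<gamma> ^ sp_dist E x (s i)) [1..<Suc n]"

text \<open>History entry for each previous decision: state at the decision, option values there,
  the option chosen, and the set of reward indices collected after executing it.\<close>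
type_synonym hist = "(nat \<times> real list \<times> nat \<times> nat set) list"
type_synonym det_local_policy = "nat \<Rightarrow> hist \<Rightarrow> real list \<Rightarrow> nat"

definition collected :: "nat \<Rightarrow> (nat \<Rightarrow> nat) \<Rightarrow> nat \<Rightarrow> hist \<Rightarrow> nat set" where
  "collected n s s0 h = (if h = [] then {i \<in> {1..n}. s i = s0} else snd (snd (snd (last h))))"

text \<open>Decision-level run: (state, elapsed time, history) before the k-th decision.\<close>
fun run :: "nat \<Rightarrow> real \<Rightarrow> (nat \<times> nat) set \<Rightarrow> nat \<Rightarrow> (nat \<Rightarrow> nat) \<Rightarrow> (nat \<Rightarrow> nat \<Rightarrow> nat)
    \<Rightarrow> det_local_policy \<Rightarrow> nat \<Rightarrow> nat \<times> nat \<times> hist" where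
  "run n \<gamma> E s0 s nxt \<pi> 0 = (s0, 0, [])"
| "run n \<gamma> E s0 s nxt \<pi> (Suc k) =
    (case run n \<gamma> E s0 s nxt \<pi> k of (x, t, h) \<Rightarrow>
      (let v = option_values n \<gamma> E s x; j = \<pi> x h v; dd = sp_dist E x (s j);
           C = collected n s s0 h \<union> {i \<in> {1..n}. \<exists>m\<le>dd. (nxt j ^^ m) x = s i}
       in (s j, t + dd, h @ [(x, v, j, C)])))"

definition visit_times :: "nat \<Rightarrow> real \<Rightarrow> (nat \<times> nat) set \<Rightarrow> nat \<Rightarrow> (nat \<Rightarrow> nat) \<Rightarrow> (nat \<Rightarrow> nat \<Rightarrow> nat)
    \<Rightarrow> det_local_policy \<Rightarrow> nat \<Rightarrow> nat set" where
  "visit_times n \<gamma> E s0 s nxt \<pi> i =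
     {t + m | k x t h m. run n \<gamma> E s0 s nxt \<pi> k = (x, t, h) \<and>
        (let j = \<pi> x h (option_values n \<gamma> E s x) in
           m \<le> sp_dist E x (s j) \<and> (nxt j ^^ m) x = s i)}"

definition policy_value :: "nat \<Rightarrow> real \<Rightarrow> (nat \<times> nat) set \<Rightarrow> nat \<Rightarrow> (nat \<Rightarrow> nat) \<Rightarrow> (nat \<Rightarrow> nat \<Rightarrow> nat)
    \<Rightarrow> det_local_policy \<Rightarrow> real" where
  "policy_value n \<gamma> E s0 s nxt \<pi> =
     (\<Sum>i \<in> {i \<in> {1..n}. visit_times n \<gamma> E s0 s nxt \<pi> i \<noteq> {}}.
        \<gamma> ^ (LEAST t. t \<in> visit_times n \<gamma> E s0 s nxt \<pi> i))"

definition order_value :: "nat \<Rightarrow> real \<Rightarrow> (nat \<times> nat) set \<Rightarrow> nat \<Rightarrow> (nat \<Rightarrow> nat) \<Rightarrow> (nat \<Rightarrow> nat) \<Rightarrow> real" where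
  "order_value n \<gamma> E s0 s \<sigma> =
     (let pt = (\<lambda>t. if t = 0 then s0 else s (\<sigma> t)) in
      \<Sum>j = 1..n. \<gamma> ^ (\<Sum>t = 1..j. sp_dist E (pt (t - 1)) (pt t)))"

definition OPT :: "nat \<Rightarrow> real \<Rightarrow> (nat \<times> nat) set \<Rightarrow> nat \<Rightarrow> (nat \<Rightarrow> nat) \<Rightarrow> real" where
  "OPT n \<gamma> E s0 s = Max {order_value n \<gamma> E s0 s \<sigma> | \<sigma>. \<sigma> permutes {1..n}}"

end

theory Submission
  imports Defs
begin

text \<open>At the start state all option values are equal, so the first option j chosen by a
  deterministic local policy depends on the policy alone. Build the MDP around j: from the start
  state and from every reward state other than s j, each reward state is one step away, but s j
  only leads into a chain of n^2 states back to the start. The policy collects s j at time 1 and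
  every other reward only after more than n^2 steps, so its value is at most
  \<gamma> + (n - 1) \<gamma>^(n^2+3) \<le> 2. Visiting s j last collects the other rewards at times 1, ..., n - 1,
  which is worth at least (n - 1)/2 by Bernoulli's inequality.\<close>

lemma relpow_potential_le:
  assumes step: "\<And>a b. (a, b) \<in> E \<Longrightarrow> p a \<le> p b + 1"
    and path: "(x, y) \<in> E ^^ k"
  shows "p x \<le> p y + k"
  using path
proof (induction k arbitrary: y)
  case 0
  then show ?case by simp
next
  case (Suc k)
  from Suc.prems obtain z where "(x, z) \<in> E ^^ k" "(z, y) \<in> E" by (rule relpow_Suc_E)
  with Suc.IH step show ?case by fastforce
qed

lemma sp_dist_eq_potential:
  assumes step: "\<And>a b. (a, b) \<in> E \<Longrightarrow> p a \<le> p b + 1"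
    and target: "p y = 0"
    and path: "(x, y) \<in> E ^^ p x"
  shows "sp_dist E x y = p x"
  unfolding sp_dist_def
proof (rule Least_equality)
  show "(x, y) \<in> E ^^ p x" by (fact path)
next
  fix k assume "(x, y) \<in> E ^^ k"
  from relpow_potential_le[where p = p, OF step this] target show "p x \<le> k" by simp
qed

lemma order_value_le_OPT:
  assumes "\<sigma> permutes {1..n}"
  shows "order_value n \<gamma> E s0 s \<sigma> \<le> OPT n \<gamma> E s0 s"
proof -
  have "{order_value n \<gamma> E s0 s \<sigma> | \<sigma>. \<sigma> permutes {1..n}}
      = (\<lambda>\<sigma>. order_value n \<gamma> E s0 s \<sigma>) ` {\<sigma>. \<sigma> permutes {1..n}}"
    by blast
  then have "finite {order_value n \<gamma> E s0 s \<sigma> | \<sigma>. \<sigma> permutes {1..n}}"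
    using finite_permutations[of "{1..n}"] by simp
  then show ?thesis
    unfolding OPT_def by (rule Max_ge) (use assms in blast)
qed

subsection \<open>Discount estimates for \<gamma> = 1 - 1/n\<close>

lemma one_minus_inverse_power_le_half:
  assumes "1 \<le> n"
  shows "(1 - 1 / real n) ^ n \<le> 1 / 2"
proof -
  have "(1 - 1 / real n) ^ n \<le> exp (- 1 / real n) ^ n"
    using exp_ge_add_one_self[of "- 1 / real n"] assms
    by (intro power_mono) (auto simp: field_simps)
  also have "\<dots> = exp (-1)"
    using assms by (simp add: exp_of_nat_mult[symmetric])
  also have "\<dots> \<le> 1 / 2"
    using exp_ge_add_one_self[of 1] by (simp add: exp_minus field_simps)
  finally show ?thesis .
qed

lemma pred_mult_power_le_one:
  assumes "1 \<le> n" and "n * n \<le> k"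
  shows "(real n - 1) * (1 - 1 / real n) ^ k \<le> 1"
proof -
  define g where "g = 1 - 1 / real n"
  have g: "0 \<le> g" "g \<le> 1" using assms(1) by (auto simp: g_def field_simps)
  have "g ^ k \<le> g ^ (n * n)" using g assms(2) by (intro power_decreasing) auto
  also have "\<dots> = (g ^ n) ^ n" by (simp add: power_mult)
  also have "\<dots> \<le> (1 / 2) ^ n"
    using one_minus_inverse_power_le_half[OF assms(1)] g by (intro power_mono) (auto simp: g_def)
  finally have "g ^ k \<le> (1 / 2) ^ n" .
  moreover have "real n \<le> 2 ^ n"
    using less_exp[of n] by (metis of_nat_le_iff of_nat_numeral of_nat_power less_imp_le)
  then have "real n - 1 \<le> 2 ^ n" by linarith
  ultimately have "(real n - 1) * g ^ k \<le> 2 ^ n * (1 / 2) ^ n"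
    using g by (intro mult_mono) auto
  also have "\<dots> = 1" by (simp add: power_mult_distrib[symmetric])
  finally show ?thesis by (simp add: g_def)
qed

lemma sum_one_minus_inverse_power_ge:
  assumes "1 \<le> n"
  shows "(real n - 1) / 2 \<le> (\<Sum>J = 1..n - 1. (1 - 1 / real n) ^ J)"
proof -
  have "(\<Sum>J = 1..n - 1. (1 - 1 / real n) ^ J) \<ge> (\<Sum>J = 1..n - 1. 1 - real J / real n)"
  proof (rule sum_mono)
    fix J
    have "-1 \<le> - 1 / real n" using assms by (simp add: field_simps)
    from Bernoulli_inequality[OF this, of J] show "1 - real J / real n \<le> (1 - 1 / real n) ^ J"
      by simp
  qed
  moreover have "(\<Sum>J = 1..n - 1. 1 - real J / real n) = (real n - 1) / 2"
  proof -
    have gauss: "(\<Sum>J = 1..m. real J) = real m * (real m + 1) / 2" for m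
      by (induction m) (auto simp: field_simps)
    have "(\<Sum>J = 1..n - 1. 1 - real J / real n) = real (n - 1) - (\<Sum>J = 1..n - 1. real J) / real n"
      by (simp add: sum_subtractf sum_divide_distrib)
    also have "\<dots> = real (n - 1) - real (n - 1) * (real (n - 1) + 1) / 2 / real n"
      by (simp only: gauss)
    also have "\<dots> = (real n - 1) / 2"
      using assms by (simp add: of_nat_diff field_simps)
    finally show ?thesis .
  qed
  ultimately show ?thesis by simp
qed

subsection \<open>The trap MDP\<close>

definition trap_states :: "nat \<Rightarrow> nat \<Rightarrow> nat set" where
  "trap_states n L = {0..n + L}"

text \<open>Start state 0, reward states 1, ..., n and the chain j, n + 1, ..., n + L, 0;
  every state also carries a self-loop, so that each state has a successor.\<close>
definition trap_edges :: "nat \<Rightarrow> nat \<Rightarrow> nat \<Rightarrow> (nat \<times> nat) set" where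
  "trap_edges n L j = {(x, y). x \<le> n + L \<and> y \<le> n + L \<and>
     (x = y \<or> (x \<le> n \<and> x \<noteq> j \<and> 1 \<le> y \<and> y \<le> n) \<or> (x = j \<and> y = n + 1) \<or>
      (n < x \<and> x < n + L \<and> y = x + 1) \<or> (x = n + L \<and> y = 0))}"

definition trap_dist :: "nat \<Rightarrow> nat \<Rightarrow> nat \<Rightarrow> nat \<Rightarrow> nat \<Rightarrow> nat" where
  "trap_dist n L j r x =
     (if x = r then 0 else if x \<le> n \<and> x \<noteq> j then 1 else if x = j then L + 2 else n + L + 2 - x)"

definition trap_next :: "nat \<Rightarrow> nat \<Rightarrow> nat \<Rightarrow> nat \<Rightarrow> nat \<Rightarrow> nat" where
  "trap_next n L j r x =
     (if x = r then r else if x \<le> n \<and> x \<noteq> j then r else if x = j then n + 1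
      else if x < n + L then x + 1 else 0)"

lemma trap_next_cases:
  assumes "x \<in> trap_states n L" "j \<in> {1..n}"
  obtains "x = r" "trap_next n L j r x = r" "trap_dist n L j r x = 0"
  | "x \<noteq> r" "x \<le> n" "x \<noteq> j" "trap_next n L j r x = r" "trap_dist n L j r x = 1"
  | "x \<noteq> r" "x = j" "trap_next n L j r x = n + 1" "trap_dist n L j r x = L + 2"
  | "x \<noteq> r" "n < x" "x < n + L" "trap_next n L j r x = x + 1" "trap_dist n L j r x = n + L + 2 - x"
  | "x \<noteq> r" "n < x" "x = n + L" "trap_next n L j r x = 0" "trap_dist n L j r x = 2"
  using assms unfolding trap_states_def trap_next_def trap_dist_def
  by (cases "x = r"; cases "x \<le> n \<and> x \<noteq> j"; cases "x = j"; cases "x < n + L") auto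

lemma trap_edge_dist_le:
  assumes "(x, y) \<in> trap_edges n L j" "j \<in> {1..n}" "r \<in> {1..n}"
  shows "trap_dist n L j r x \<le> trap_dist n L j r y + 1"
  using assms unfolding trap_edges_def trap_dist_def by auto

lemma trap_next_edge:
  assumes "x \<in> trap_states n L" "1 \<le> L" "j \<in> {1..n}" "r \<in> {1..n}"
  shows "(x, trap_next n L j r x) \<in> trap_edges n L j"
  using assms(1,3) by (rule trap_next_cases[where r = r])
    (use assms in \<open>auto simp: trap_edges_def trap_states_def\<close>)

lemma trap_next_in_states:
  assumes "x \<in> trap_states n L" "1 \<le> L" "j \<in> {1..n}" "r \<in> {1..n}"
  shows "trap_next n L j r x \<in> trap_states n L"
  using trap_next_edge[OF assms] by (simp add: trap_edges_def trap_states_def)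

lemma trap_dist_next:
  assumes "x \<in> trap_states n L" "1 \<le> L" "j \<in> {1..n}" "r \<in> {1..n}" "x \<noteq> r"
  shows "Suc (trap_dist n L j r (trap_next n L j r x)) = trap_dist n L j r x"
  using assms(1,3) by (rule trap_next_cases[where r = r]) (use assms in \<open>auto simp: trap_dist_def\<close>)

lemma trap_next_iterate:
  assumes "x \<in> trap_states n L" "1 \<le> L" "j \<in> {1..n}" "r \<in> {1..n}"
  shows "(x, (trap_next n L j r ^^ m) x) \<in> trap_edges n L j ^^ m \<and>
    (trap_next n L j r ^^ m) x \<in> trap_states n L"
proof (induction m)
  case 0
  then show ?case using assms by simp
next
  case (Suc m)
  then show ?case using trap_next_edge[OF _ assms(2-4)] trap_next_in_states[OF _ assms(2-4)] by auto
qed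

lemma trap_next_reaches:
  assumes "x \<in> trap_states n L" "1 \<le> L" "j \<in> {1..n}" "r \<in> {1..n}"
  shows "(trap_next n L j r ^^ trap_dist n L j r x) x = r"
  using assms(1)
proof (induction "trap_dist n L j r x" arbitrary: x)
  case 0
  from 0(2) assms(3) have "x = r"
    by (rule trap_next_cases[where r = r]) (use 0(1) in auto)
  with 0(1) show ?case by (metis funpow_0)
next
  case (Suc d)
  from Suc.hyps(2) have "x \<noteq> r" by (auto simp: trap_dist_def)
  from trap_dist_next[OF Suc.prems assms(2-4) this] Suc.hyps(2)
  have d: "d = trap_dist n L j r (trap_next n L j r x)" by simp
  have "(trap_next n L j r ^^ d) (trap_next n L j r x) = r"
    using Suc.hyps(1)[OF d trap_next_in_states[OF Suc.prems assms(2-4)]] d by simp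
  then show ?case by (simp add: Suc.hyps(2)[symmetric] funpow_Suc_right del: funpow.simps)
qed

lemma trap_path:
  assumes "x \<in> trap_states n L" "1 \<le> L" "j \<in> {1..n}" "r \<in> {1..n}"
  shows "(x, r) \<in> trap_edges n L j ^^ trap_dist n L j r x"
  using trap_next_iterate[OF assms, of "trap_dist n L j r x"] trap_next_reaches[OF assms] by simp

lemma sp_dist_trap:
  assumes "x \<in> trap_states n L" "1 \<le> L" "j \<in> {1..n}" "r \<in> {1..n}"
  shows "sp_dist (trap_edges n L j) x r = trap_dist n L j r x"
proof (rule sp_dist_eq_potential)
  show "trap_dist n L j r a \<le> trap_dist n L j r b + 1" if "(a, b) \<in> trap_edges n L j" for a b
    using trap_edge_dist_le[OF that assms(3,4)] .
  show "trap_dist n L j r r = 0" by (simp add: trap_dist_def)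
  show "(x, r) \<in> trap_edges n L j ^^ trap_dist n L j r x" by (rule trap_path[OF assms])
qed

lemma trap_crd_mdp:
  assumes "1 \<le> L" "j \<in> {1..n}"
  shows "crd_mdp n (trap_states n L) (trap_edges n L j) 0 id (trap_next n L j)"
  unfolding crd_mdp_def
proof (intro conjI ballI impI)
  show "finite (trap_states n L)" by (simp add: trap_states_def)
  show "trap_edges n L j \<subseteq> trap_states n L \<times> trap_states n L"
    by (auto simp: trap_edges_def trap_states_def)
  show "0 \<in> trap_states n L" "id ` {1..n} \<subseteq> trap_states n L" "inj_on id {1..n}"
    by (auto simp: trap_states_def)
next
  fix x assume "x \<in> trap_states n L"
  then have "(x, x) \<in> trap_edges n L j" by (auto simp: trap_edges_def trap_states_def)
  then show "\<exists>y. (x, y) \<in> trap_edges n L j" by blast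
next
  fix x i assume x: "x \<in> trap_states n L" and i: "i \<in> {1..n}"
  show "(x, id i) \<in> (trap_edges n L j)\<^sup>*"
    using trap_path[OF x assms i] by (simp add: relpow_imp_rtrancl)
  show "(x, trap_next n L j i x) \<in> trap_edges n L j" by (rule trap_next_edge[OF x assms i])
  assume "x \<noteq> id i"
  then show "Suc (sp_dist (trap_edges n L j) (trap_next n L j i x) (id i))
      = sp_dist (trap_edges n L j) x (id i)"
    unfolding id_apply sp_dist_trap[OF x assms i] sp_dist_trap[OF trap_next_in_states[OF x assms i] assms i]
    by (rule trap_dist_next[OF x assms i])
qed

lemma trap_option_values_start:
  assumes "1 \<le> L" "j \<in> {1..n}"
  shows "option_values n \<gamma> (trap_edges n L j) id 0 = replicate n \<gamma>"
proof -
  have "option_values n \<gamma> (trap_edges n L j) id 0 = map (\<lambda>i. \<gamma>) [1..<Suc n]"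
    unfolding option_values_def
  proof (rule map_cong[OF refl])
    fix i assume "i \<in> set [1..<Suc n]"
    then have "i \<in> {1..n}" by auto
    moreover have "0 \<in> trap_states n L" by (simp add: trap_states_def)
    ultimately show "\<gamma> ^ sp_dist (trap_edges n L j) 0 (id i) = \<gamma>"
      using assms by (simp add: sp_dist_trap trap_dist_def)
  qed
  then show ?thesis by (simp only: map_replicate_const length_upt diff_Suc_1)
qed

lemma trap_order_value_ge:
  assumes "j \<in> {1..n}" "1 \<le> L" "0 \<le> \<gamma>" "\<gamma> \<le> 1"
  shows "(\<Sum>J = 1..n - 1. \<gamma> ^ J) \<le> order_value n \<gamma> (trap_edges n L j) 0 id (Transposition.transpose j n)"
proof -
  define \<sigma> where "\<sigma> = Transposition.transpose j n"
  define pt where "pt t = (if t = 0 then 0 else \<sigma> t)" for t :: nat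
  let ?d = "\<lambda>t. sp_dist (trap_edges n L j) (pt (t - 1)) (pt t)"
  have \<sigma>: "\<sigma> permutes {1..n}"
    unfolding \<sigma>_def by (rule permutes_swap_id) (use assms(1) in auto)
  have hop: "?d t \<le> 1" if "1 \<le> t" "t \<le> n - 1" for t
  proof -
    have "pt t \<in> {1..n}" using permutes_in_image[OF \<sigma>, of t] that by (simp add: pt_def)
    moreover have "pt (t - 1) \<le> n \<and> pt (t - 1) \<noteq> j"
      using permutes_in_image[OF \<sigma>, of "t - 1"] that assms(1)
      by (auto simp: pt_def \<sigma>_def transpose_def)
    ultimately show ?thesis
      using assms by (simp add: sp_dist_trap trap_states_def trap_dist_def)
  qed
  have "(\<Sum>J = 1..n - 1. \<gamma> ^ J) \<le> (\<Sum>J = 1..n - 1. \<gamma> ^ (\<Sum>t = 1..J. ?d t))"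
  proof (rule sum_mono)
    fix J assume "J \<in> {1..n - 1}"
    then have "(\<Sum>t = 1..J. ?d t) \<le> (\<Sum>t = 1..J. 1)" by (intro sum_mono hop) auto
    then show "\<gamma> ^ J \<le> \<gamma> ^ (\<Sum>t = 1..J. ?d t)" using assms(3,4) by (intro power_decreasing) auto
  qed
  also have "\<dots> \<le> (\<Sum>J = 1..n. \<gamma> ^ (\<Sum>t = 1..J. ?d t))"
    by (rule sum_mono2) (use assms(3) in auto)
  also have "\<dots> = order_value n \<gamma> (trap_edges n L j) 0 id \<sigma>"
    by (simp add: order_value_def pt_def id_def)
  finally show ?thesis by (simp add: \<sigma>_def)
qed

subsection \<open>Runs of a deterministic local policy on the trap\<close>

locale trap_run =
  fixes n L :: nat and g :: real and \<pi> :: det_local_policy and j :: nat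
  assumes L_pos: "1 \<le> L"
    and policy_range: "\<And>x h v. \<pi> x h v \<in> {1..n}"
    and first_choice: "j = \<pi> 0 [] (replicate n g)"
begin

lemma first_choice_range: "j \<in> {1..n}"
  using policy_range first_choice by simp

lemma start_choice: "\<pi> 0 [] (option_values n g (trap_edges n L j) id 0) = j"
  using trap_option_values_start[OF L_pos first_choice_range] first_choice by simp

lemma dist_start_choice: "sp_dist (trap_edges n L j) 0 j = 1"
  using first_choice_range L_pos by (simp add: sp_dist_trap trap_states_def trap_dist_def)

lemma run_Suc_position:
  assumes "run n g (trap_edges n L j) 0 id (trap_next n L j) \<pi> (Suc k) = (x, t, h)"
  shows "x \<in> {1..n} \<and> 1 \<le> t \<and> (j, x) \<in> trap_edges n L j ^^ (t - 1)"
  using assms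
proof (induction k arbitrary: x t h)
  case 0
  then have "x = \<pi> 0 [] (option_values n g (trap_edges n L j) id 0)"
    and "t = sp_dist (trap_edges n L j) 0 x"
    by (auto simp: Let_def id_def)
  then show ?case using first_choice_range by (simp add: start_choice dist_start_choice)
next
  case (Suc k)
  obtain y u h' where prev: "run n g (trap_edges n L j) 0 id (trap_next n L j) \<pi> (Suc k) = (y, u, h')"
    by (metis prod_cases3)
  define c where "c = \<pi> y h' (option_values n g (trap_edges n L j) id y)"
  define d where "d = sp_dist (trap_edges n L j) y c"
  from Suc.prems have xt: "x = c" "t = u + d"
    unfolding run.simps(2)[where k = "Suc k"] prev prod.case Let_def
    unfolding c_def[symmetric] by (auto simp: d_def)
  from Suc.IH[OF prev] have y: "y \<in> {1..n}" "1 \<le> u" "(j, y) \<in> trap_edges n L j ^^ (u - 1)"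
    by auto
  have c: "c \<in> {1..n}" using policy_range by (simp add: c_def)
  have ys: "y \<in> trap_states n L" using y(1) by (simp add: trap_states_def)
  have "(y, c) \<in> trap_edges n L j ^^ d"
    using trap_path[OF ys L_pos first_choice_range c] sp_dist_trap[OF ys L_pos first_choice_range c]
    by (simp add: d_def)
  with y(3) have "(j, c) \<in> trap_edges n L j ^^ (u - 1 + d)" by (auto simp: relpow_add)
  with xt y(2) c show ?case by (simp add: Suc_diff_le)
qed

text \<open>After its first option the policy sits at s j, and every other reward state is at
  distance L + 2 from there.\<close>
lemma visit_time_bounds:
  assumes i: "i \<in> {1..n}"
    and \<tau>: "\<tau> \<in> visit_times n g (trap_edges n L j) 0 id (trap_next n L j) \<pi> i"
  shows "1 \<le> \<tau> \<and> (i \<noteq> j \<longrightarrow> L + 3 \<le> \<tau>)"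
proof -
  from \<tau> obtain k x t h m
    where run: "run n g (trap_edges n L j) 0 id (trap_next n L j) \<pi> k = (x, t, h)"
      and \<tau>_eq: "\<tau> = t + m"
      and m: "m \<le> sp_dist (trap_edges n L j) x (\<pi> x h (option_values n g (trap_edges n L j) id x))"
      and reach: "(trap_next n L j (\<pi> x h (option_values n g (trap_edges n L j) id x)) ^^ m) x = i"
    unfolding visit_times_def Let_def by auto
  show ?thesis
  proof (cases k)
    case 0
    with run have x: "x = 0" "t = 0" "h = []" by auto
    with m have "m \<le> 1" by (simp add: start_choice dist_start_choice)
    moreover from reach x i have "m \<noteq> 0" by (cases m) auto
    ultimately have "m = 1" by simp
    with reach x first_choice_range have "i = j" by (simp add: start_choice trap_next_def)
    with \<tau>_eq x \<open>m = 1\<close> show ?thesis by simp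
  next
    case (Suc k')
    from run_Suc_position[OF run[unfolded Suc]]
    have x: "x \<in> {1..n}" "1 \<le> t" "(j, x) \<in> trap_edges n L j ^^ (t - 1)" by auto
    define c where "c = \<pi> x h (option_values n g (trap_edges n L j) id x)"
    have c: "c \<in> {1..n}" using policy_range by (simp add: c_def)
    have xs: "x \<in> trap_states n L" using x(1) by (simp add: trap_states_def)
    have "(x, i) \<in> trap_edges n L j ^^ m"
      using trap_next_iterate[OF xs L_pos first_choice_range c, of m] reach by (simp add: c_def)
    with x(3) have "(j, i) \<in> trap_edges n L j ^^ (t - 1 + m)" by (auto simp: relpow_add)
    then have "trap_dist n L j i j \<le> trap_dist n L j i i + (t - 1 + m)"
      by (rule relpow_potential_le[rotated]) (rule trap_edge_dist_le[OF _ first_choice_range i])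
    then have "i \<noteq> j \<longrightarrow> L + 2 \<le> t - 1 + m" by (auto simp: trap_dist_def)
    with \<tau>_eq x(2) show ?thesis by auto
  qed
qed

lemma policy_value_le:
  assumes "0 \<le> g" "g \<le> 1"
  shows "policy_value n g (trap_edges n L j) 0 id (trap_next n L j) \<pi> \<le> g + (real n - 1) * g ^ (L + 3)"
proof -
  let ?T = "visit_times n g (trap_edges n L j) 0 id (trap_next n L j) \<pi>"
  define f where "f i = (if i = j then g else g ^ (L + 3))" for i
  have first_visit: "g ^ (LEAST t. t \<in> ?T i) \<le> f i" if "i \<in> {1..n}" "?T i \<noteq> {}" for i
  proof -
    from that(2) have "(LEAST t. t \<in> ?T i) \<in> ?T i" by (metis LeastI_ex ex_in_conv)
    from visit_time_bounds[OF that(1) this] assms show ?thesis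
      unfolding f_def by (auto intro: power_decreasing[where a = g and n = 1, simplified]
          power_decreasing[where a = g and n = "L + 3"])
  qed
  have "policy_value n g (trap_edges n L j) 0 id (trap_next n L j) \<pi>
      = (\<Sum>i \<in> {i \<in> {1..n}. ?T i \<noteq> {}}. g ^ (LEAST t. t \<in> ?T i))"
    by (simp add: policy_value_def)
  also have "\<dots> \<le> (\<Sum>i \<in> {i \<in> {1..n}. ?T i \<noteq> {}}. f i)"
    by (rule sum_mono) (use first_visit in auto)
  also have "\<dots> \<le> (\<Sum>i \<in> {1..n}. f i)"
    by (rule sum_mono2) (use assms in \<open>auto simp: f_def\<close>)
  also have "\<dots> = f j + (\<Sum>i \<in> {1..n} - {j}. f i)"
    using first_choice_range by (simp add: sum.remove)
  also have "\<dots> = g + (real n - 1) * g ^ (L + 3)"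
  proof -
    have "(\<Sum>i \<in> {1..n} - {j}. f i) = (\<Sum>i \<in> {1..n} - {j}. g ^ (L + 3))"
      by (rule sum.cong) (auto simp: f_def)
    then show ?thesis using first_choice_range by (simp add: f_def of_nat_diff)
  qed
  finally show ?thesis .
qed

end

theorem theorem2:
  fixes n :: nat and \<pi> :: det_local_policy
  assumes "n \<ge> 1"
    and "\<forall>x h v. \<pi> x h v \<in> {1..n}"
  shows "\<exists>S E s0 s nxt. crd_mdp n S E s0 s nxt \<and>
           policy_value n (1 - 1 / real n) E s0 s nxt \<pi> / OPT n (1 - 1 / real n) E s0 s
             \<le> 24 / real n"
proof -
  define g where "g = 1 - 1 / real n"
  define L where "L = n * n"
  define j where "j = \<pi> 0 [] (replicate n g)"
  interpret trap_run n L g \<pi> j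
    using assms by unfold_locales (auto simp: L_def j_def)
  have g: "0 \<le> g" "g \<le> 1" using assms(1) by (auto simp: g_def)
  let ?V = "policy_value n g (trap_edges n L j) 0 id (trap_next n L j) \<pi>"
  let ?O = "OPT n g (trap_edges n L j) 0 id"
  have V: "?V \<le> g + (real n - 1) * g ^ (L + 3)" by (rule policy_value_le[OF g])
  have "(real n - 1) / 2 \<le> (\<Sum>J = 1..n - 1. g ^ J)"
    unfolding g_def by (rule sum_one_minus_inverse_power_ge[OF assms(1)])
  also have "\<dots> \<le> order_value n g (trap_edges n L j) 0 id (Transposition.transpose j n)"
    by (rule trap_order_value_ge[OF first_choice_range L_pos g])
  also have "\<dots> \<le> ?O"
    using first_choice_range assms(1) by (intro order_value_le_OPT permutes_swap_id) auto
  finally have O: "(real n - 1) / 2 \<le> ?O" .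
  have "?V / ?O \<le> 24 / real n"
  proof (cases "n = 1")
    case True
    with V O have "?V / ?O \<le> 0" by (simp add: g_def divide_nonpos_nonneg)
    then show ?thesis using True by simp
  next
    case False
    with assms(1) have n: "2 \<le> n" by simp
    have "(real n - 1) * g ^ (L + 3) \<le> 1"
      unfolding g_def by (rule pred_mult_power_le_one[OF assms(1)]) (simp add: L_def)
    with V g have "?V \<le> 2" by linarith
    with O n have "?V / ?O \<le> 2 / ((real n - 1) / 2)" by (intro frac_le) auto
    also have "\<dots> \<le> 24 / real n" using n by (simp add: field_simps)
    finally show ?thesis .
  qed
  with trap_crd_mdp[OF L_pos first_choice_range] show ?thesis unfolding g_def by blast
qed

end
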